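(* Let $a,c\in\mathbb{C}$ satisfy $2c\notin\{0,-1,-2,\dots\}$, $2a\notin\{1,2,3,\dots\}$ and $\operatorname{Re}(c-a)>\tfrac12$. Let $w$ be a complex number with $|w|=1$ and $w\neq\pm1$, and put $z=w^2$. Then $$ {}_2H_2\!\left[\begin{matrix} a,\ a+\tfrac12\\ c,\ c+\tfrac12\end{matrix};\ z\right] =\frac{\Gamma(2c)\,\Gamma(1-2a)}{2\,\Gamma(2c-2a)}\left(\frac{(1+w)^{2c-2a-1}}{w^{2c-1}}+\frac{(1-w)^{2c-2a-1}}{(-w)^{2c-1}}\right), $$ where all powers are principal branches as described in the context. In particular the right-hand side is unchanged if $w$ is replaced by $-w$.
   Context: For $x\in\mathbb{C}$ and integers $m$, the Pochhammer symbol is $(x)_0=1$, $(x)_m=x(x+1)\cdots(x+m-1)$ for $m\ge1$, and $(x)_{-m}=\dfrac{1}{(x-1)(x-2)\cdots(x-m)}$ for $m\ge1$ (equivalently $(x)_m=\Gamma(x+m)/\Gamma(x)$). The bilateral hypergeometric series is $$ {}_2H_2\!\left[\begin{matrix} a_1,a_2\\ b_1,b_2\end{matrix};z\right]=\sum_{m=-\infty}^{\infty}\frac{(a_1)_m(a_2)_m}{(b_1)_m(b_2)_m}\,z^m . $$ Under the stated hypotheses all terms are defined and, for $|z|=1$, the series converges absolutely (its terms are $O(|m|^{2\operatorname{Re}(a-c)})$ as $m\to\pm\infty$). Branch conventions: every $u$ with $|u|=1$, $u\neq-1$ is written uniquely as $u=e^{i\psi}$ with $\psi\in(-\pi,\pi)$,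 and for $s\in\mathbb{C}$ one sets $u^{s}:=e^{is\psi}$ and $(1+u)^{s}:=\bigl(2\cos(\psi/2)\bigr)^{s}e^{is\psi/2}$ (with the real positive base raised to the power $s$ in the usual way). This is applied with $u=w$ and with $u=-w$, where $(1-w)^s:=(1+(-w))^s$. *)

theory Defs
  imports "HOL-Analysis.Analysis"
begin

definition poch_int :: "complex \<Rightarrow> int \<Rightarrow> complex" where
  "poch_int x m =
     (if 0 \<le> m then pochhammer x (nat m)
      else 1 / pochhammer (x - of_int (- m)) (nat (- m)))"

definition H22_term :: "complex \<Rightarrow> complex \<Rightarrow> complex \<Rightarrow> complex \<Rightarrow> complex \<Rightarrow> int \<Rightarrow> complex" where
  "H22_term a1 a2 b1 b2 z m =
     poch_int a1 m * poch_int a2 m / (poch_int b1 m * poch_int b2 m) * z powi m"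

text \<open>Branch conventions: for |u| = 1, u \<noteq> -1, u = exp(i psi) with psi = Arg u in (-pi,pi);
  u^s := exp(i s psi) and (1+u)^s := (2 cos(psi/2))^s exp(i s psi/2).\<close>
definition circ_pow :: "complex \<Rightarrow> complex \<Rightarrow> complex" where
  "circ_pow u s = exp (\<i> * s * complex_of_real (Arg u))"

definition onep_pow :: "complex \<Rightarrow> complex \<Rightarrow> complex" where
  "onep_pow u s = complex_of_real (2 * cos (Arg u / 2)) powr s
                    * exp (\<i> * s * complex_of_real (Arg u) / 2)"

definition H22_rhs :: "complex \<Rightarrow> complex \<Rightarrow> complex \<Rightarrow> complex" where
  "H22_rhs a c w =
     Gamma (2*c) * Gamma (1 - 2*a) / (2 * Gamma (2*c - 2*a)) *
     (onep_pow w (2*c - 2*a - 1) / circ_pow w (2*c - 1)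
      + onep_pow (- w) (2*c - 2*a - 1) / circ_pow (- w) (2*c - 1))"

end

theory Submission
  imports Defs
begin

text \<open>
  By the duplication formula \<open>(a)\<^sub>m (a + 1/2)\<^sub>m = (2a)\<^sub>2\<^sub>m / 4\<^sup>m\<close> the series is the
  even part of the bilateral series \<open>\<^sub>1H\<^sub>1[A; C; z] = \<Sum>\<^sub>n (A)\<^sub>n / (C)\<^sub>n z\<^sup>n\<close> with
  \<open>A = 2a\<close>, \<open>C = 2c\<close>, i.e. half the sum of its values at \<open>z = w\<close> and \<open>z = -w\<close>.
  On the unit circle
  \<open>\<^sub>1H\<^sub>1[A; C; z] = \<Gamma>(C) \<Gamma>(1 - A) / \<Gamma>(C - A) \<cdot> (1 - z)\<^bsup>-A\<^esup> (1 - z\<^sup>*)\<^bsup>C-1\<^esup>\<close>.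
  For \<open>Re A < 0\<close> and \<open>Re C > 1\<close> this is the Cauchy product of two binomial series, which
  converge absolutely on the circle (Abel's theorem gives their sums); the coefficients of the
  product are values of Gauss's \<open>\<^sub>2F\<^sub>1\<close> at \<open>1\<close>.  Contiguous relations in \<open>A\<close> and \<open>C\<close>, read as
  first-order difference equations of the coefficients, then extend the identity to all
  admissible \<open>A\<close>, \<open>C\<close>.  Finally the principal powers are rewritten in the branch
  conventions of the statement.
\<close>

section \<open>Growth of Pochhammer quotients\<close>

lemma add_of_nat_notin_nonpos_Ints:
  fixes c :: "'a :: ring_1"
  assumes "c \<notin> \<int>\<^sub>\<le>\<^sub>0"
  shows "c + of_nat m \<notin> \<int>\<^sub>\<le>\<^sub>0"
  using assms nonpos_Ints_diff_Nats[of "c + of_nat m" "of_nat m"] by auto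

lemma add_of_nat_nonzero_if_notin_nonpos_Ints:
  fixes c :: "'a :: ring_1"
  assumes "c \<notin> \<int>\<^sub>\<le>\<^sub>0"
  shows "c + of_nat m \<noteq> 0"
  using add_of_nat_notin_nonpos_Ints[OF assms, of m] by auto

lemma pochhammer_nonzero_if_notin_nonpos_Ints:
  fixes c :: "'a :: field_char_0"
  assumes "c \<notin> \<int>\<^sub>\<le>\<^sub>0"
  shows "pochhammer c n \<noteq> 0"
  using assms pochhammer_eq_0_imp_nonpos_Int by blast

lemma Re_pos_notin_nonpos_Ints:
  fixes c :: complex
  assumes "Re c > 0"
  shows "c \<notin> \<int>\<^sub>\<le>\<^sub>0"
  using assms by (auto elim!: nonpos_Ints_cases')

lemma powr_le_two_powr_abs_mult_powr_plus1:
  fixes k s :: real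
  assumes "k \<ge> 1"
  shows "k powr s \<le> 2 powr \<bar>s\<bar> * (k + 1) powr s"
proof (cases "s \<ge> 0")
  case True
  have "k powr s \<le> (k + 1) powr s" using assms True by (intro powr_mono2) auto
  also have "\<dots> \<le> 2 powr \<bar>s\<bar> * (k + 1) powr s"
    using ge_one_powr_ge_zero[of 2 "\<bar>s\<bar>"] by (simp add: mult_le_cancel_right1)
  finally show ?thesis .
next
  case False
  have "k powr s = (k + 1) powr s * ((k + 1) / k) powr (- s)"
    using assms by (simp add: powr_minus powr_divide)
  also have "\<dots> \<le> (k + 1) powr s * 2 powr (- s)"
    using assms False by (intro mult_left_mono powr_mono2) (auto simp: divide_simps)
  finally show ?thesis using False by (simp add: mult.commute)
qed

text \<open>The quotient \<open>rGamma_series a n / rGamma_series c n = (a)\<^sub>n\<^sub>+\<^sub>1 / (c)\<^sub>n\<^sub>+\<^sub>1 \<cdot> n\<^bsup>c - a\<^esup>\<close>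
  converges, hence is bounded.\<close>
lemma pochhammer_quotient_bound:
  fixes a c :: complex
  assumes c: "c \<notin> \<int>\<^sub>\<le>\<^sub>0"
  obtains M where "\<And>n. n \<ge> 1 \<Longrightarrow> norm (pochhammer a n / pochhammer c n) \<le> M * real n powr Re (a - c)"
proof -
  have "(\<lambda>n. rGamma_series a n / rGamma_series c n) \<longlonglongrightarrow> rGamma a / rGamma c"
    using c by (intro tendsto_intros) (simp_all add: rGamma_eq_zero_iff)
  then obtain B where B: "\<And>n. norm (rGamma_series a n / rGamma_series c n) \<le> B"
    by (metis BseqE convergent_imp_Bseq convergentI)
  have B0: "B \<ge> 0" using B[of 0] norm_ge_zero order_trans by blast
  have Suc_bound: "norm (pochhammer a (Suc k) / pochhammer c (Suc k)) \<le> B * real k powr Re (a - c)"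
    if k: "k \<ge> 1" for k
  proof -
    define L where "L = complex_of_real (ln (real k))"
    have eq: "pochhammer a (Suc k) / pochhammer c (Suc k)
        = (rGamma_series a k / rGamma_series c k) * exp ((a - c) * L)"
      using pochhammer_nonzero_if_notin_nonpos_Ints[OF c, of "Suc k"]
      by (simp add: rGamma_series_def L_def field_simps exp_diff[symmetric] exp_add[symmetric]
                    algebra_simps)
    moreover have "norm (exp ((a - c) * L)) = real k powr Re (a - c)"
      using k by (simp add: L_def norm_exp_eq_Re powr_def)
    ultimately show ?thesis
      using B[of k] unfolding eq norm_mult by (simp add: mult_right_mono)
  qed
  define s where "s = Re (a - c)"
  define M where "M = max (norm (a / c)) (B * 2 powr \<bar>s\<bar>)"
  have "norm (pochhammer a n / pochhammer c n) \<le> M * real n powr s" if n: "n \<ge> 1" for n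
  proof (cases "n = 1")
    case True
    thus ?thesis by (simp add: M_def)
  next
    case False
    then obtain k where nk: "n = Suc k" and k: "k \<ge> 1" using n by (cases n) auto
    have "norm (pochhammer a n / pochhammer c n) \<le> B * real k powr s"
      using Suc_bound[OF k] by (simp add: nk s_def)
    also have "\<dots> \<le> (B * 2 powr \<bar>s\<bar>) * real n powr s"
      using powr_le_two_powr_abs_mult_powr_plus1[of k s] k B0
      by (auto simp: nk add.commute mult.assoc intro: mult_left_mono)
    also have "\<dots> \<le> M * real n powr s"
      by (intro mult_right_mono) (auto simp: M_def)
    finally show ?thesis .
  qed
  thus ?thesis using that unfolding s_def by blast
qed

lemma summable_norm_if_powr_bound:
  fixes f :: "nat \<Rightarrow> 'a :: real_normed_vector"
  assumes "\<And>n. n \<ge> 1 \<Longrightarrow> norm (f n) \<le> M * real n powr s" and "s < -1"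
  shows "summable (\<lambda>n. norm (f n))"
proof (rule summable_comparison_test'[where N = 1])
  show "summable (\<lambda>n. M * real n powr s)"
    using assms(2) by (intro summable_mult) (simp add: summable_real_powr_iff)
qed (use assms(1) in auto)

section \<open>Gauss's summation theorem\<close>

definition hyp2F1_coeff :: "complex \<Rightarrow> complex \<Rightarrow> complex \<Rightarrow> nat \<Rightarrow> complex" where
  "hyp2F1_coeff a b c n = pochhammer a n * pochhammer b n / (pochhammer c n * fact n)"

lemma hyp2F1_coeff_bound:
  assumes c: "c \<notin> \<int>\<^sub>\<le>\<^sub>0"
  obtains M where "\<And>n. n \<ge> 1 \<Longrightarrow> norm (hyp2F1_coeff a b c n) \<le> M * real n powr (Re (a + b - c) - 1)"
proof -
  obtain M1 where M1: "\<And>n. n \<ge> 1 \<Longrightarrow> norm (pochhammer a n / pochhammer c n) \<le> M1 * real n powr Re (a - c)"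
    using pochhammer_quotient_bound[OF c] by blast
  obtain M2 where M2: "\<And>n. n \<ge> 1 \<Longrightarrow> norm (pochhammer b n / pochhammer 1 n) \<le> M2 * real n powr Re (b - 1)"
    using pochhammer_quotient_bound[of 1 b] by auto
  have M2_nonneg: "M2 \<ge> 0" using order_trans[OF norm_ge_zero M2[of 1]] by simp
  have "norm (hyp2F1_coeff a b c n) \<le> (M1 * M2) * real n powr (Re (a + b - c) - 1)" if n: "n \<ge> 1" for n
  proof -
    have "norm (hyp2F1_coeff a b c n)
        = norm (pochhammer a n / pochhammer c n) * norm (pochhammer b n / pochhammer 1 n)"
      by (simp add: hyp2F1_coeff_def pochhammer_fact norm_mult norm_divide)
    also have "\<dots> \<le> (M1 * real n powr Re (a - c)) * (M2 * real n powr Re (b - 1))"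
      using M1[OF n] M2[OF n] M2_nonneg order_trans[OF norm_ge_zero M1[OF n]]
      by (intro mult_mono) auto
    also have "\<dots> = (M1 * M2) * real n powr (Re (a + b - c) - 1)"
      by (simp add: powr_add[symmetric] algebra_simps)
    finally show ?thesis .
  qed
  thus ?thesis using that by blast
qed

lemma summable_norm_hyp2F1_coeff:
  assumes "c \<notin> \<int>\<^sub>\<le>\<^sub>0" and "Re (c - a - b) > 0"
  shows "summable (\<lambda>n. norm (hyp2F1_coeff a b c n))"
proof -
  obtain M where "\<And>n. n \<ge> 1 \<Longrightarrow> norm (hyp2F1_coeff a b c n) \<le> M * real n powr (Re (a + b - c) - 1)"
    using hyp2F1_coeff_bound[OF assms(1)] by blast
  thus ?thesis by (rule summable_norm_if_powr_bound) (use assms(2) in auto)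
qed

lemma of_nat_mult_hyp2F1_coeff_tendsto_0:
  assumes "c \<notin> \<int>\<^sub>\<le>\<^sub>0" and re: "Re (c - a - b) > 0"
  shows "(\<lambda>n. of_nat n * hyp2F1_coeff a b c n) \<longlonglongrightarrow> 0"
proof -
  obtain M where M: "\<And>n. n \<ge> 1 \<Longrightarrow> norm (hyp2F1_coeff a b c n) \<le> M * real n powr (Re (a + b - c) - 1)"
    using hyp2F1_coeff_bound[OF assms(1)] by blast
  have "eventually (\<lambda>n. norm (of_nat n * hyp2F1_coeff a b c n) \<le> M * real n powr Re (a + b - c)) sequentially"
    using eventually_ge_at_top[of 1]
  proof eventually_elim
    case (elim n)
    have "norm (of_nat n * hyp2F1_coeff a b c n) \<le> real n * (M * real n powr (Re (a + b - c) - 1))"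
      using M[OF elim] by (simp add: norm_mult mult_left_mono)
    also have "\<dots> = M * real n powr Re (a + b - c)"
      using elim by (simp add: powr_mult_base mult.left_commute algebra_simps)
    finally show ?case .
  qed
  moreover have "(\<lambda>n. M * real n powr Re (a + b - c)) \<longlonglongrightarrow> 0"
    using re by (intro tendsto_mult_right_zero tendsto_neg_powr filterlim_real_sequentially) simp
  ultimately show ?thesis by (rule Lim_null_comparison)
qed

lemma hyp2F1_coeff_Suc:
  assumes "c \<notin> \<int>\<^sub>\<le>\<^sub>0"
  shows "hyp2F1_coeff a b c (Suc n)
       = hyp2F1_coeff a b c n * (a + of_nat n) * (b + of_nat n) / ((c + of_nat n) * (of_nat n + 1))"
  using pochhammer_nonzero_if_notin_nonpos_Ints[OF assms, of n]
        add_of_nat_nonzero_if_notin_nonpos_Ints[OF assms, of n]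
  by (simp add: hyp2F1_coeff_def pochhammer_rec' field_simps)

lemma hyp2F1_coeff_plus1_right:
  assumes "c \<notin> \<int>\<^sub>\<le>\<^sub>0"
  shows "hyp2F1_coeff a b (c + 1) n = hyp2F1_coeff a b c n * c / (c + of_nat n)"
proof -
  have c0: "c \<noteq> 0" using add_of_nat_nonzero_if_notin_nonpos_Ints[OF assms, of 0] by simp
  have "pochhammer (c + 1) n = (c + of_nat n) * pochhammer c n / c"
    using pochhammer_rec[of c n] pochhammer_rec'[of c n] c0 by (simp add: field_simps)
  then show ?thesis
    using pochhammer_nonzero_if_notin_nonpos_Ints[OF assms, of n]
          add_of_nat_nonzero_if_notin_nonpos_Ints[OF assms, of n] c0
    unfolding hyp2F1_coeff_def by (simp only:) (simp add: field_simps)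
qed

text \<open>Gauss's contiguous relation at \<open>z = 1\<close>: the termwise difference of the two sides
  telescopes as \<open>D n - D (n + 1)\<close> with \<open>D n = c n F\<^sub>n\<close>, \<open>F\<^sub>n = hyp2F1_coeff a b c n\<close>,
  and \<open>D n \<longlonglongrightarrow> 0\<close>.\<close>
lemma hyp2F1_contiguous_at_1:
  assumes c: "c \<notin> \<int>\<^sub>\<le>\<^sub>0" and re: "Re (c - a - b) > 0"
  shows "c * (c - a - b) * suminf (hyp2F1_coeff a b c)
       = (c - a) * (c - b) * suminf (hyp2F1_coeff a b (c + 1))"
proof -
  define u where "u = hyp2F1_coeff a b c"
  define v where "v = hyp2F1_coeff a b (c + 1)"
  define D where "D n = c * (of_nat n * u n)" for n
  have su: "summable u"
    unfolding u_def by (rule summable_norm_cancel[OF summable_norm_hyp2F1_coeff[OF c re]])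
  have sv: "summable v"
    unfolding v_def using add_of_nat_notin_nonpos_Ints[OF c, of 1] re
    by (intro summable_norm_cancel[OF summable_norm_hyp2F1_coeff]) simp_all
  have telescope: "c * (c - a - b) * u n - (c - a) * (c - b) * v n = D n - D (Suc n)" for n
  proof -
    have "(of_nat n + 1 :: complex) \<noteq> 0"
      by (metis of_nat_Suc of_nat_eq_0_iff add.commute nat.distinct(1))
    hence "D (Suc n) = c * u n * (a + of_nat n) * (b + of_nat n) / (c + of_nat n)"
      unfolding D_def u_def hyp2F1_coeff_Suc[OF c] of_nat_Suc
      by (simp add: divide_simps)
    moreover have "v n = u n * c / (c + of_nat n)"
      unfolding u_def v_def by (rule hyp2F1_coeff_plus1_right[OF c])
    moreover have "c * (c - a - b) * U - (c - a) * (c - b) * (U * c / (c + of_nat n))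
        = c * (of_nat n * U) - c * U * (a + of_nat n) * (b + of_nat n) / (c + of_nat n)" for U
      using add_of_nat_nonzero_if_notin_nonpos_Ints[OF c, of n] by (simp add: field_simps)
    ultimately show ?thesis by (simp only: D_def)
  qed
  have "(\<lambda>n. c * (c - a - b) * u n - (c - a) * (c - b) * v n) sums
          (c * (c - a - b) * suminf u - (c - a) * (c - b) * suminf v)"
    by (intro sums_diff sums_mult summable_sums su sv)
  moreover have "D \<longlonglongrightarrow> c * 0"
    unfolding D_def u_def by (intro tendsto_mult tendsto_const of_nat_mult_hyp2F1_coeff_tendsto_0[OF c re])
  hence "(\<lambda>n. D n - D (Suc n)) sums (D 0 - c * 0)" by (rule telescope_sums')
  ultimately have "c * (c - a - b) * suminf u - (c - a) * (c - b) * suminf v = D 0 - c * 0"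
    unfolding telescope by (rule sums_unique2)
  thus ?thesis by (simp add: D_def u_def v_def)
qed

lemma hyp2F1_contiguous_at_1_iterate:
  assumes c: "c \<notin> \<int>\<^sub>\<le>\<^sub>0" and re: "Re (c - a - b) > 0"
  shows "pochhammer c m * pochhammer (c - a - b) m * suminf (hyp2F1_coeff a b c)
       = pochhammer (c - a) m * pochhammer (c - b) m * suminf (hyp2F1_coeff a b (c + of_nat m))"
proof (induction m)
  case 0
  then show ?case by simp
next
  case (Suc m)
  define c' where "c' = c + of_nat m"
  have step: "c' * (c' - a - b) * suminf (hyp2F1_coeff a b c')
            = (c' - a) * (c' - b) * suminf (hyp2F1_coeff a b (c' + 1))"
    unfolding c'_def using add_of_nat_notin_nonpos_Ints[OF c] re
    by (intro hyp2F1_contiguous_at_1) simp_all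
  have "pochhammer c (Suc m) * pochhammer (c - a - b) (Suc m) * suminf (hyp2F1_coeff a b c)
      = c' * (c' - a - b) * (pochhammer c m * pochhammer (c - a - b) m * suminf (hyp2F1_coeff a b c))"
    by (simp add: pochhammer_rec' c'_def algebra_simps)
  also have "\<dots> = pochhammer (c - a) m * pochhammer (c - b) m * (c' * (c' - a - b) * suminf (hyp2F1_coeff a b c'))"
    unfolding Suc.IH c'_def by (simp add: algebra_simps)
  also have "\<dots> = pochhammer (c - a) (Suc m) * pochhammer (c - b) (Suc m)
                  * suminf (hyp2F1_coeff a b (c + of_nat (Suc m)))"
    unfolding step by (simp add: pochhammer_rec' c'_def algebra_simps)
  finally show ?case .
qed

lemma norm_pochhammer_le_add_nonneg_real:
  fixes x :: complex and t :: real
  assumes "Re x \<ge> 0" "t \<ge> 0"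
  shows "norm (pochhammer x n) \<le> norm (pochhammer (x + of_real t) n)"
proof -
  have "norm y \<le> norm (y + of_real t)" if "Re y \<ge> 0" for y :: complex
  proof -
    have "(norm y)\<^sup>2 \<le> (norm (y + of_real t))\<^sup>2"
      using that assms(2) unfolding cmod_power2 by (simp add: power2_eq_square algebra_simps)
    thus ?thesis by (rule power2_le_imp_le) simp
  qed
  hence "(\<Prod>i<n. norm (x + of_nat i)) \<le> (\<Prod>i<n. norm ((x + of_nat i) + of_real t))"
    using assms by (intro prod_mono) auto
  thus ?thesis by (simp add: pochhammer_prod atLeast0LessThan prod_norm algebra_simps)
qed

text \<open>Comparison with \<open>c\<^sub>0 = c + m\<^sub>0\<close> (where \<open>Re c\<^sub>0 > 0\<close>) bounds the tail
  \<open>\<Sum>n\<ge>1. F\<^sub>n(c + m)\<close> by \<open>O(1 / |c + m|)\<close>.\<close>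
lemma hyp2F1_at_1_tendsto_1:
  assumes c: "c \<notin> \<int>\<^sub>\<le>\<^sub>0" and re: "Re (c - a - b) > 0"
  shows "(\<lambda>m. suminf (hyp2F1_coeff a b (c + of_nat m))) \<longlonglongrightarrow> 1"
proof -
  define m0 where "m0 = nat \<lceil>- Re c\<rceil> + 1"
  define c0 where "c0 = c + of_nat m0"
  have m0: "Re c + real m0 > 0" unfolding m0_def by linarith
  have c0: "c0 \<notin> \<int>\<^sub>\<le>\<^sub>0" unfolding c0_def by (rule add_of_nat_notin_nonpos_Ints[OF c])
  have c0_nz: "c0 \<noteq> 0" using m0 by (auto simp: c0_def complex_eq_iff)
  define S where "S = (\<Sum>n. norm (hyp2F1_coeff a b c0 (Suc n)))"
  have sS: "summable (\<lambda>n. norm (hyp2F1_coeff a b c0 (Suc n)))"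
    using summable_norm_hyp2F1_coeff[OF c0] re by (subst summable_Suc_iff) (simp add: c0_def)
  have bound: "norm (suminf (hyp2F1_coeff a b (c + of_nat m)) - 1)
             \<le> norm c0 * S * norm (inverse (c + of_nat m))" if m: "m \<ge> m0" for m
  proof -
    define x where "x = c + of_nat m"
    have x: "x \<notin> \<int>\<^sub>\<le>\<^sub>0" unfolding x_def by (rule add_of_nat_notin_nonpos_Ints[OF c])
    have rex: "Re (x - a - b) > 0" using re by (simp add: x_def)
    have sx: "summable (\<lambda>n. norm (hyp2F1_coeff a b x (Suc n)))"
      using summable_norm_hyp2F1_coeff[OF x rex] by (subst summable_Suc_iff)
    have norm_Suc: "norm (hyp2F1_coeff a b y (Suc n))
        = norm (pochhammer a (Suc n) * pochhammer b (Suc n) / fact (Suc n))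
          / (norm y * norm (pochhammer (y + 1) n))" for y n
      unfolding hyp2F1_coeff_def pochhammer_rec[of y] norm_divide norm_mult by simp
    have tail_le: "norm (hyp2F1_coeff a b x (Suc n))
        \<le> (norm c0 * norm (inverse x)) * norm (hyp2F1_coeff a b c0 (Suc n))" for n
    proof -
      have "x + 1 = (c0 + 1) + of_real (real (m - m0))"
        using m by (simp add: x_def c0_def of_nat_diff)
      hence "norm (pochhammer (c0 + 1) n) \<le> norm (pochhammer (x + 1) n)"
        using m0 by (simp only:) (intro norm_pochhammer_le_add_nonneg_real, auto simp: c0_def)
      moreover have "pochhammer (c0 + 1) n \<noteq> 0"
        using add_of_nat_notin_nonpos_Ints[OF c0, of 1]
        by (intro pochhammer_nonzero_if_notin_nonpos_Ints) simp
      moreover have "x \<noteq> 0" using add_of_nat_nonzero_if_notin_nonpos_Ints[OF x, of 0] by simp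
      ultimately have "norm (hyp2F1_coeff a b x (Suc n))
          \<le> norm (pochhammer a (Suc n) * pochhammer b (Suc n) / fact (Suc n))
             / (norm x * norm (pochhammer (c0 + 1) n))"
        unfolding norm_Suc by (intro divide_left_mono mult_left_mono) (auto intro!: mult_pos_pos)
      also have "\<dots> = (norm c0 * norm (inverse x)) * norm (hyp2F1_coeff a b c0 (Suc n))"
        unfolding norm_Suc using c0_nz by (simp add: norm_inverse divide_inverse)
      finally show ?thesis .
    qed
    have "suminf (hyp2F1_coeff a b x) - 1 = (\<Sum>n. hyp2F1_coeff a b x (Suc n))"
      using suminf_split_head[OF summable_norm_cancel[OF summable_norm_hyp2F1_coeff[OF x rex]]]
      by (simp add: hyp2F1_coeff_def[of _ _ _ 0])
    hence "norm (suminf (hyp2F1_coeff a b x) - 1) \<le> (\<Sum>n. norm (hyp2F1_coeff a b x (Suc n)))"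
      using summable_norm[OF sx] by simp
    also have "\<dots> \<le> (\<Sum>n. (norm c0 * norm (inverse x)) * norm (hyp2F1_coeff a b c0 (Suc n)))"
      by (intro suminf_le tail_le sx summable_mult sS)
    also have "\<dots> = norm c0 * S * norm (inverse x)"
      unfolding S_def using sS by (subst suminf_mult) (auto simp: algebra_simps)
    finally show ?thesis unfolding x_def .
  qed
  have "filterlim (\<lambda>m. c + of_nat m) at_infinity sequentially"
    using filterlim_real_sequentially
    by (intro tendsto_add_filterlim_at_infinity[OF tendsto_const])
       (simp add: filterlim_at_infinity_conv_norm_at_top)
  hence "(\<lambda>m. norm c0 * S * norm (inverse (c + of_nat m))) \<longlonglongrightarrow> 0"
    using filterlim_compose[OF tendsto_inverse_0]
    by (intro tendsto_mult_right_zero tendsto_norm_zero) blast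
  moreover have "eventually (\<lambda>m. norm (suminf (hyp2F1_coeff a b (c + of_nat m)) - 1)
                     \<le> norm c0 * S * norm (inverse (c + of_nat m))) sequentially"
    using eventually_ge_at_top[of m0] by eventually_elim (rule bound)
  ultimately have "(\<lambda>m. suminf (hyp2F1_coeff a b (c + of_nat m)) - 1) \<longlonglongrightarrow> 0"
    by (rule Lim_null_comparison[rotated])
  thus ?thesis by (simp add: LIM_zero_iff)
qed

text \<open>Gauss's summation theorem, obtained from the iterated contiguous relation by
  letting \<open>m \<rightarrow> \<infinity>\<close>: after multiplication with \<open>rGamma_series\<close> factors both sides converge.\<close>
theorem has_sum_hyp2F1_coeff_Gauss:
  assumes c: "c \<notin> \<int>\<^sub>\<le>\<^sub>0" and re: "Re (c - a - b) > 0"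
  shows "(hyp2F1_coeff a b c has_sum Gamma c * Gamma (c - a - b) * rGamma (c - a) * rGamma (c - b)) UNIV"
proof -
  define G where "G = suminf (hyp2F1_coeff a b c)"
  have eq: "rGamma_series c k * rGamma_series (c - a - b) k * G
          = rGamma_series (c - a) k * rGamma_series (c - b) k * suminf (hyp2F1_coeff a b (c + of_nat (Suc k)))"
    for k
  proof -
    define L where "L = complex_of_real (ln (real k))"
    have "exp (c * L) * exp ((c - a - b) * L) = exp ((c - a) * L) * exp ((c - b) * L)"
      by (simp add: exp_add[symmetric] algebra_simps)
    with hyp2F1_contiguous_at_1_iterate[OF c re, of "Suc k"] show ?thesis
      unfolding G_def rGamma_series_def L_def[symmetric] by (simp add: field_simps)
  qed
  have "(\<lambda>k. rGamma_series c k * rGamma_series (c - a - b) k * G) \<longlonglongrightarrow> rGamma c * rGamma (c - a - b) * G"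
    by (intro tendsto_intros)
  moreover have "(\<lambda>k. rGamma_series (c - a) k * rGamma_series (c - b) k * suminf (hyp2F1_coeff a b (c + of_nat (Suc k))))
      \<longlonglongrightarrow> rGamma (c - a) * rGamma (c - b) * 1"
    by (intro tendsto_intros LIMSEQ_Suc[OF hyp2F1_at_1_tendsto_1[OF c re]])
  ultimately have "rGamma c * rGamma (c - a - b) * G = rGamma (c - a) * rGamma (c - b)"
    unfolding eq using LIMSEQ_unique by fastforce
  moreover have "rGamma c \<noteq> 0" "rGamma (c - a - b) \<noteq> 0"
    using c Re_pos_notin_nonpos_Ints[of "c - a - b"] re by (auto simp: rGamma_eq_zero_iff)
  ultimately have "G = Gamma c * Gamma (c - a - b) * rGamma (c - a) * rGamma (c - b)"
    by (simp add: rGamma_inverse_Gamma field_simps)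
  moreover have "summable (\<lambda>n. norm (hyp2F1_coeff a b c n))"
    by (rule summable_norm_hyp2F1_coeff[OF c re])
  ultimately show ?thesis
    unfolding G_def by (metis norm_summable_imp_has_sum summable_norm_cancel summable_sums)
qed

section \<open>The binomial series on the unit circle\<close>

lemma summable_norm_gbinomial:
  fixes \<alpha> :: complex
  assumes "Re \<alpha> > 0"
  shows "summable (\<lambda>j. norm (\<alpha> gchoose j))"
proof -
  obtain M where M: "\<And>n. n \<ge> 1 \<Longrightarrow> norm (pochhammer (- \<alpha>) n / pochhammer 1 n) \<le> M * real n powr Re (- \<alpha> - 1)"
    using pochhammer_quotient_bound[of 1 "- \<alpha>"] by auto
  have "norm (\<alpha> gchoose j) = norm (pochhammer (- \<alpha>) j / pochhammer 1 j)" for j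
    by (simp add: gbinomial_pochhammer pochhammer_fact norm_mult norm_divide norm_power)
  with M have "\<And>n. n \<ge> 1 \<Longrightarrow> norm (\<alpha> gchoose n) \<le> M * real n powr Re (- \<alpha> - 1)" by simp
  thus ?thesis by (rule summable_norm_if_powr_bound) (use assms in auto)
qed

lemma unit_circle_neq_minus_one_imp_Re_gt:
  fixes u :: complex
  assumes "norm u = 1" "u \<noteq> -1"
  shows "Re u > -1"
proof -
  have "\<bar>Re u\<bar> \<le> 1" using abs_Re_le_cmod[of u] assms(1) by simp
  moreover have "Re u \<noteq> -1"
  proof
    assume "Re u = -1"
    moreover from this have "Im u = 0" using assms(1) cmod_power2[of u] by simp
    ultimately show False using assms(2) complex_eq_iff by auto
  qed
  ultimately show ?thesis by linarith
qed

text \<open>Abel's theorem: the binomial series converges absolutely on the unit circle when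
  \<open>Re \<alpha> > 0\<close>, so its sum is the radial limit of \<open>(1 + r u) powr \<alpha>\<close> as \<open>r \<rightarrow> 1\<^sup>-\<close>.\<close>
lemma gbinomial_series_unit_circle:
  fixes \<alpha> u :: complex
  assumes re: "Re \<alpha> > 0" and u: "norm u = 1" "u \<noteq> -1"
  shows "(\<lambda>j. (\<alpha> gchoose j) * u ^ j) sums ((1 + u) powr \<alpha>)"
proof -
  define f where "f r = (\<Sum>j. (\<alpha> gchoose j) * (complex_of_real r * u) ^ j)" for r :: real
  have sn: "summable (\<lambda>j. norm (\<alpha> gchoose j))" by (rule summable_norm_gbinomial[OF re])
  have "uniform_limit {0..1} (\<lambda>n r. \<Sum>j<n. (\<alpha> gchoose j) * (complex_of_real r * u) ^ j) f sequentially"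
    unfolding f_def
  proof (rule Weierstrass_m_test[OF _ sn])
    fix j :: nat and r :: real assume r: "r \<in> {0..1}"
    have "norm ((\<alpha> gchoose j) * (complex_of_real r * u) ^ j) = norm (\<alpha> gchoose j) * \<bar>r\<bar> ^ j"
      using u by (simp add: norm_mult norm_power)
    also have "\<dots> \<le> norm (\<alpha> gchoose j)"
      using r by (intro mult_left_le power_le_one) auto
    finally show "norm ((\<alpha> gchoose j) * (complex_of_real r * u) ^ j) \<le> norm (\<alpha> gchoose j)" .
  qed
  hence "continuous_on {0..1} f"
    by (rule uniform_limit_theorem[rotated]) (auto intro!: always_eventually continuous_intros)
  hence f_lim: "(f \<longlongrightarrow> f 1) (at_left 1)"
    by (rule continuous_on_Icc_at_leftD) simp
  have "eventually (\<lambda>r. (1 + complex_of_real r * u) powr \<alpha> = f r) (at_left (1::real))"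
    using eventually_at_left_real[OF zero_less_one]
  proof (rule eventually_mono)
    fix r :: real assume "r \<in> {0<..<1}"
    hence "norm (complex_of_real r * u) < 1" using u by (simp add: norm_mult)
    from gen_binomial_complex[OF this, of \<alpha>] show "(1 + complex_of_real r * u) powr \<alpha> = f r"
      unfolding f_def by (simp add: sums_iff)
  qed
  moreover have "((\<lambda>r. (1 + complex_of_real r * u) powr \<alpha>) \<longlongrightarrow> (1 + u) powr \<alpha>) (at_left (1::real))"
  proof (rule tendsto_powr_complex[OF _ _ tendsto_const])
    show "1 + u \<notin> \<real>\<^sub>\<le>\<^sub>0"
      using unit_circle_neq_minus_one_imp_Re_gt[OF u] by (auto simp: complex_nonpos_Reals_iff)
    show "((\<lambda>r. 1 + complex_of_real r * u) \<longlongrightarrow> 1 + u) (at_left (1::real))"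
      by (rule tendsto_eq_intros refl | simp)+
  qed
  ultimately have "(f \<longlongrightarrow> (1 + u) powr \<alpha>) (at_left 1)"
    by (rule Lim_transform_eventually[rotated]) 
  hence "f 1 = (1 + u) powr \<alpha>"
    using tendsto_unique[OF trivial_limit_at_left_real f_lim] by simp
  moreover have "summable (\<lambda>j. (\<alpha> gchoose j) * u ^ j)"
    by (rule summable_norm_cancel) (use sn u in \<open>simp add: norm_mult norm_power\<close>)
  ultimately show ?thesis unfolding f_def by (simp add: sums_iff)
qed

lemma has_sum_diff:
  fixes f g :: "'a \<Rightarrow> 'b :: topological_ab_group_add"
  assumes "(f has_sum a) A" "(g has_sum b) A"
  shows "((\<lambda>x. f x - g x) has_sum (a - b)) A"
proof -
  have "((\<lambda>x. - g x) has_sum - b) A" using assms(2) by (simp add: has_sum_uminus)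
  from has_sum_add[OF assms(1) this] show ?thesis by simp
qed

lemma has_sum_mult_product:
  fixes f :: "'a \<Rightarrow> complex" and g :: "'b \<Rightarrow> complex"
  assumes f: "(f has_sum F) A" "(\<lambda>x. norm (f x)) summable_on A"
    and g: "(g has_sum G) B" "(\<lambda>y. norm (g y)) summable_on B"
  shows "((\<lambda>(x, y). f x * g y) has_sum F * G) (A \<times> B)"
proof (rule has_sum_SigmaI)
  define N where "N = infsum (\<lambda>y. norm (g y)) B"
  have "(\<lambda>(x, y). norm (f x * g y)) summable_on A \<times> B"
  proof (rule summable_on_SigmaI)
    show "((\<lambda>y. (\<lambda>(x, y). norm (f x * g y)) (x, y)) has_sum norm (f x) * N) B" for x
      using has_sum_cmult_right[OF has_sum_infsum[OF g(2)], of "norm (f x)"]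
      by (simp add: N_def norm_mult)
    show "(\<lambda>x. norm (f x) * N) summable_on A"
      using f(2) by (rule summable_on_cmult_left)
  qed auto
  thus "(\<lambda>(x, y). f x * g y) summable_on A \<times> B"
    by (simp add: summable_on_iff_abs_summable_on_complex case_prod_unfold)
  show "((\<lambda>y. (\<lambda>(x, y). f x * g y) (x, y)) has_sum f x * G) B" for x
    using has_sum_cmult_right[OF g(1)] by simp
  show "((\<lambda>x. f x * G) has_sum F * G) A"
    by (rule has_sum_cmult_left[OF f(1)])
qed

lemma has_sum_nat_shift:
  fixes g :: "nat \<Rightarrow> 'a :: topological_comm_monoid_add"
  assumes "\<And>k. k < m \<Longrightarrow> g k = 0" and "((\<lambda>j. g (j + m)) has_sum S) UNIV"
  shows "(g has_sum S) UNIV"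
proof -
  have "range (\<lambda>j. j + m) = {m..}"
    by (auto simp: image_iff) presburger
  hence "(g has_sum S) {m..}"
    using assms(2) has_sum_reindex[of "\<lambda>j. j + m" UNIV g] by (simp add: inj_on_def o_def)
  thus ?thesis
    by (rule has_sum_cong_neutral[THEN iffD1, rotated -1]) (auto intro: assms(1))
qed

lemma has_sum_int_shift_powi:
  fixes g :: "int \<Rightarrow> 'a :: {real_normed_field}"
  assumes w: "w \<noteq> 0" and h: "((\<lambda>n. g n * w powi n) has_sum S) UNIV"
  shows "((\<lambda>n. g (n - 1) * w powi n) has_sum (w * S)) UNIV"
proof -
  have "bij (\<lambda>n::int. n - 1)"
    by (rule bij_betwI[where g = "\<lambda>n. n + 1"]) auto
  hence "((\<lambda>n. g (n - 1) * w powi (n - 1)) has_sum S) UNIV"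
    using h has_sum_reindex_bij_betw[of "\<lambda>n::int. n - 1" UNIV UNIV "\<lambda>n. g n * w powi n"] by simp
  hence "((\<lambda>n. w * (g (n - 1) * w powi (n - 1))) has_sum (w * S)) UNIV"
    by (rule has_sum_cmult_right)
  moreover have "w * (g (n - 1) * w powi (n - 1)) = g (n - 1) * w powi n" for n
    using power_int_add_1'[of w "n - 1"] w by (simp add: mult_ac)
  ultimately show ?thesis by simp
qed

lemma has_sum_int_even:
  fixes f :: "int \<Rightarrow> 'a :: topological_comm_monoid_add"
  assumes "(f has_sum S) UNIV" and "\<And>n. odd n \<Longrightarrow> f n = 0"
  shows "((\<lambda>m. f (2 * m)) has_sum S) UNIV"
proof -
  have "(f has_sum S) (range (\<lambda>m::int. 2 * m))"
    using assms(1) by (rule has_sum_cong_neutral[THEN iffD1, rotated -1])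
                      (auto intro: assms(2) elim!: evenE)
  thus ?thesis by (subst (asm) has_sum_reindex) (auto simp: inj_on_def o_def)
qed

lemma abs_summable_on_int_if_both_halves:
  fixes f :: "int \<Rightarrow> 'a :: real_normed_vector"
  assumes "summable (\<lambda>m. norm (f (int m)))" and "summable (\<lambda>m. norm (f (- int m)))"
  shows "(\<lambda>n. norm (f n)) summable_on UNIV"
proof -
  have "(\<lambda>n. norm (f n)) summable_on range int"
    using assms(1) by (subst summable_on_reindex) (auto simp: o_def summable_on_UNIV_nonneg_real_iff)
  moreover have "(\<lambda>n. norm (f n)) summable_on range (\<lambda>m::nat. - int m)"
    using assms(2) by (subst summable_on_reindex) (auto simp: inj_on_def o_def summable_on_UNIV_nonneg_real_iff)
  moreover have "range int \<union> range (\<lambda>m::nat. - int m) = UNIV"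
    by (auto simp: image_iff) presburger
  ultimately show ?thesis using summable_on_union by metis
qed

section \<open>The bilateral series \<open>\<^sub>1H\<^sub>1\<close> on the unit circle\<close>

definition H11_coeff :: "complex \<Rightarrow> complex \<Rightarrow> int \<Rightarrow> complex" where
  "H11_coeff A C n = poch_int A n / poch_int C n"

definition H11_gamma :: "complex \<Rightarrow> complex \<Rightarrow> complex" where
  "H11_gamma A C = Gamma C * Gamma (1 - A) / Gamma (C - A)"

definition H11_power :: "complex \<Rightarrow> complex \<Rightarrow> complex \<Rightarrow> complex" where
  "H11_power A C z = (1 - z) powr (- A) * (1 - cnj z) powr (C - 1)"

lemma H11_coeff_of_nat: "H11_coeff A C (int m) = pochhammer A m / pochhammer C m"
  by (simp add: H11_coeff_def poch_int_def)

lemma pochhammer_minus_of_nat_self: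
  fixes x :: "'a :: comm_ring_1"
  shows "pochhammer (x - of_nat m) m = (-1) ^ m * pochhammer (1 - x) m"
  using pochhammer_minus'[of "x - 1" m] by (simp add: algebra_simps)

lemma H11_coeff_minus_of_nat: "H11_coeff A C (- int m) = pochhammer (1 - C) m / pochhammer (1 - A) m"
proof (cases "m = 0")
  case False
  hence "H11_coeff A C (- int m) = pochhammer (C - of_nat m) m / pochhammer (A - of_nat m) m"
    by (simp add: H11_coeff_def poch_int_def)
  also have "\<dots> = pochhammer (1 - C) m / pochhammer (1 - A) m"
    unfolding pochhammer_minus_of_nat_self by (rule mult_divide_mult_cancel_left) simp
  finally show ?thesis .
qed (simp add: H11_coeff_def poch_int_def)

lemma gbinomial_minus_conv_pochhammer:
  fixes A :: "'a :: field_char_0"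
  shows "(- A) gchoose j = (-1) ^ j * pochhammer A j / fact j"
    and "(C - 1) gchoose j = (-1) ^ j * pochhammer (1 - C) j / fact j"
  by (simp_all add: gbinomial_pochhammer)

text \<open>The two coefficient identities behind the Cauchy product of the binomial series of
  \<open>(1 - z) powr (- A)\<close> and \<open>(1 - cnj z) powr (C - 1)\<close>; both are instances of Gauss's
  theorem with \<open>c = m + 1\<close>.\<close>
lemma has_sum_gbinomial_convolution_left:
  assumes CA: "Re (C - A) > 0" and C: "C \<notin> \<int>\<^sub>\<le>\<^sub>0"
  shows "((\<lambda>k. ((- A) gchoose (m + k)) * ((C - 1) gchoose k)) has_sum
           (-1) ^ m * (pochhammer A m / pochhammer C m) / H11_gamma A C) UNIV"
proof -
  define c where "c = (1 + of_nat m :: complex)"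
  have c: "c \<notin> \<int>\<^sub>\<le>\<^sub>0" unfolding c_def by (intro Re_pos_notin_nonpos_Ints) simp
  have Gauss: "(hyp2F1_coeff (A + of_nat m) (1 - C) c has_sum
          fact m * Gamma (C - A) * rGamma (1 - A) * rGamma (C + of_nat m)) UNIV"
    using has_sum_hyp2F1_coeff_Gauss[OF c, of "A + of_nat m" "1 - C"] CA
    by (simp add: c_def Gamma_fact algebra_simps)
  define K where "K = (-1) ^ m * pochhammer A m / fact m"
  have summand: "((- A) gchoose (m + k)) * ((C - 1) gchoose k) = K * hyp2F1_coeff (A + of_nat m) (1 - C) c k" for k
  proof -
    have "(fact (m + k) :: complex) = fact m * pochhammer c k"
      unfolding c_def pochhammer_fact pochhammer_product' by (simp add: add.commute)
    moreover have "((-1::complex) ^ (m + k)) * (-1) ^ k = (-1) ^ m"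
      by (simp add: power_add mult.assoc power_mult_distrib[symmetric])
    ultimately show ?thesis
      using pochhammer_nonzero_if_notin_nonpos_Ints[OF c, of k]
      unfolding gbinomial_minus_conv_pochhammer pochhammer_product' K_def hyp2F1_coeff_def
      by (simp add: field_simps)
  qed
  have total: "K * (fact m * Gamma (C - A) * rGamma (1 - A) * rGamma (C + of_nat m))
      = (-1) ^ m * (pochhammer A m / pochhammer C m) / H11_gamma A C"
  proof -
    have rGamma_shift: "rGamma (C + of_nat m) = rGamma C / pochhammer C m"
      using pochhammer_rGamma[of C m] pochhammer_nonzero_if_notin_nonpos_Ints[OF C, of m]
      by (simp add: field_simps)
    show ?thesis
      unfolding K_def H11_gamma_def rGamma_shift by (simp add: rGamma_inverse_Gamma divide_simps)
  qed
  show ?thesis using has_sum_cmult_right[OF Gauss, of K] unfolding summand total .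
qed

lemma has_sum_gbinomial_convolution_right:
  assumes CA: "Re (C - A) > 0" and A: "1 - A \<notin> \<int>\<^sub>\<le>\<^sub>0"
  shows "((\<lambda>j. ((- A) gchoose j) * ((C - 1) gchoose (j + m))) has_sum
           (-1) ^ m * (pochhammer (1 - C) m / pochhammer (1 - A) m) / H11_gamma A C) UNIV"
proof -
  define c where "c = (1 + of_nat m :: complex)"
  have c: "c \<notin> \<int>\<^sub>\<le>\<^sub>0" unfolding c_def by (intro Re_pos_notin_nonpos_Ints) simp
  have Gauss: "(hyp2F1_coeff A (1 - C + of_nat m) c has_sum
          fact m * Gamma (C - A) * rGamma ((1 - A) + of_nat m) * rGamma C) UNIV"
    using has_sum_hyp2F1_coeff_Gauss[OF c, of A "1 - C + of_nat m"] CA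
    by (simp add: c_def Gamma_fact algebra_simps)
  define K where "K = (-1) ^ m * pochhammer (1 - C) m / fact m"
  have summand: "((- A) gchoose j) * ((C - 1) gchoose (j + m)) = K * hyp2F1_coeff A (1 - C + of_nat m) c j" for j
  proof -
    have "(fact (m + j) :: complex) = fact m * pochhammer c j"
      unfolding c_def pochhammer_fact pochhammer_product' by (simp add: add.commute)
    moreover have "((-1::complex) ^ j) * (-1) ^ (m + j) = (-1) ^ m"
      by (simp add: power_add mult.assoc power_mult_distrib[symmetric] mult.left_commute)
    ultimately show ?thesis
      using pochhammer_nonzero_if_notin_nonpos_Ints[OF c, of j]
      unfolding gbinomial_minus_conv_pochhammer add.commute[of j m] pochhammer_product' K_def
                hyp2F1_coeff_def
      by (simp add: field_simps)
  qed
  have total: "K * (fact m * Gamma (C - A) * rGamma ((1 - A) + of_nat m) * rGamma C)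
      = (-1) ^ m * (pochhammer (1 - C) m / pochhammer (1 - A) m) / H11_gamma A C"
  proof -
    have rGamma_shift: "rGamma ((1 - A) + of_nat m) = rGamma (1 - A) / pochhammer (1 - A) m"
      using pochhammer_rGamma[of "1 - A" m] pochhammer_nonzero_if_notin_nonpos_Ints[OF A, of m]
      by (simp add: field_simps)
    show ?thesis
      unfolding K_def H11_gamma_def rGamma_shift by (simp add: rGamma_inverse_Gamma divide_simps)
  qed
  show ?thesis using has_sum_cmult_right[OF Gauss, of K] unfolding summand total .
qed

lemma H11_coeff_of_nat_Suc:
  "H11_coeff A C (int (Suc m)) = (A + of_nat m) * pochhammer A m / ((C + of_nat m) * pochhammer C m)"
  unfolding H11_coeff_of_nat pochhammer_rec' ..

lemma H11_coeff_minus_of_nat_Suc: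
  "H11_coeff A C (- int (Suc m))
     = (1 - C + of_nat m) * pochhammer (1 - C) m / ((1 - A + of_nat m) * pochhammer (1 - A) m)"
  unfolding H11_coeff_minus_of_nat pochhammer_rec' ..

lemma H11_coeff_diff_eq_minus1_left:
  assumes A: "1 - A \<notin> \<int>\<^sub>\<le>\<^sub>0" and C: "C \<notin> \<int>\<^sub>\<le>\<^sub>0"
  shows "H11_coeff A C n - H11_coeff A C (n - 1) = (A - C) / (A - 1) * H11_coeff (A - 1) C n"
proof -
  have A1: "A - 1 \<noteq> 0" "1 - A \<noteq> 0"
    using add_of_nat_nonzero_if_notin_nonpos_Ints[OF A, of 0] by auto
  show ?thesis
  proof (cases "n - 1" rule: int_cases)
    case (nonneg m)
    hence n: "n = int (Suc m)" by simp
    have L: "H11_coeff A C n = (A + of_nat m) * pochhammer A m / ((C + of_nat m) * pochhammer C m)"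
      unfolding n by (rule H11_coeff_of_nat_Suc)
    have M: "H11_coeff A C (n - 1) = pochhammer A m / pochhammer C m"
      unfolding nonneg by (rule H11_coeff_of_nat)
    have R: "H11_coeff (A - 1) C n = (A - 1) * pochhammer A m / ((C + of_nat m) * pochhammer C m)"
      unfolding n H11_coeff_of_nat pochhammer_rec[of "A - 1"] pochhammer_rec'[of C] by simp
    have "pochhammer C m \<noteq> 0" "C + of_nat m \<noteq> 0"
      using pochhammer_nonzero_if_notin_nonpos_Ints[OF C] add_of_nat_nonzero_if_notin_nonpos_Ints[OF C]
      by auto
    with A1 show ?thesis unfolding L M R by (simp add: divide_simps) (simp add: algebra_simps)
  next
    case (neg m)
    hence n: "n = - int m" by simp
    have L: "H11_coeff A C n = pochhammer (1 - C) m / pochhammer (1 - A) m"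
      unfolding n by (rule H11_coeff_minus_of_nat)
    have M: "H11_coeff A C (n - 1)
        = (1 - C + of_nat m) * pochhammer (1 - C) m / ((1 - A + of_nat m) * pochhammer (1 - A) m)"
      unfolding neg by (rule H11_coeff_minus_of_nat_Suc)
    have "(1 - A) * pochhammer (1 - (A - 1)) m = (1 - A + of_nat m) * pochhammer (1 - A) m"
      using pochhammer_rec[of "1 - A" m] pochhammer_rec'[of "1 - A" m] by (simp add: algebra_simps)
    hence "pochhammer (1 - (A - 1)) m = (1 - A + of_nat m) * pochhammer (1 - A) m / (1 - A)"
      using A1 by (simp add: field_simps)
    hence R: "H11_coeff (A - 1) C n = pochhammer (1 - C) m / ((1 - A + of_nat m) * pochhammer (1 - A) m / (1 - A))"
      unfolding n H11_coeff_minus_of_nat by (simp only:)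
    have "pochhammer (1 - A) m \<noteq> 0" "1 - A + of_nat m \<noteq> 0"
      using pochhammer_nonzero_if_notin_nonpos_Ints[OF A] add_of_nat_nonzero_if_notin_nonpos_Ints[OF A]
      by auto
    with A1 show ?thesis unfolding L M R by (simp add: divide_simps) (simp add: algebra_simps)
  qed
qed

lemma H11_coeff_diff_eq_plus1_right:
  assumes A: "1 - A \<notin> \<int>\<^sub>\<le>\<^sub>0" and C: "C \<notin> \<int>\<^sub>\<le>\<^sub>0"
  shows "H11_coeff A C n - H11_coeff A C (n - 1) = (A - C) / C * H11_coeff A (C + 1) (n - 1)"
proof -
  have C0: "C \<noteq> 0" using add_of_nat_nonzero_if_notin_nonpos_Ints[OF C, of 0] by simp
  show ?thesis
  proof (cases "n - 1" rule: int_cases)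
    case (nonneg m)
    hence n: "n = int (Suc m)" by simp
    have L: "H11_coeff A C n = (A + of_nat m) * pochhammer A m / ((C + of_nat m) * pochhammer C m)"
      unfolding n by (rule H11_coeff_of_nat_Suc)
    have M: "H11_coeff A C (n - 1) = pochhammer A m / pochhammer C m"
      unfolding nonneg by (rule H11_coeff_of_nat)
    have "pochhammer (C + 1) m = (C + of_nat m) * pochhammer C m / C"
      using pochhammer_rec[of C m] pochhammer_rec'[of C m] C0 by (simp add: field_simps)
    hence R: "H11_coeff A (C + 1) (n - 1) = pochhammer A m / ((C + of_nat m) * pochhammer C m / C)"
      unfolding nonneg H11_coeff_of_nat by simp
    have "pochhammer C m \<noteq> 0" "C + of_nat m \<noteq> 0"
      using pochhammer_nonzero_if_notin_nonpos_Ints[OF C] add_of_nat_nonzero_if_notin_nonpos_Ints[OF C]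
      by auto
    with C0 show ?thesis unfolding L M R by (simp add: divide_simps) (simp add: algebra_simps)
  next
    case (neg m)
    hence n: "n = - int m" by simp
    have L: "H11_coeff A C n = pochhammer (1 - C) m / pochhammer (1 - A) m"
      unfolding n by (rule H11_coeff_minus_of_nat)
    have M: "H11_coeff A C (n - 1)
        = (1 - C + of_nat m) * pochhammer (1 - C) m / ((1 - A + of_nat m) * pochhammer (1 - A) m)"
      unfolding neg by (rule H11_coeff_minus_of_nat_Suc)
    have "pochhammer (1 - (C + 1)) (Suc m) = (- C) * pochhammer (1 - C) m"
      by (simp add: pochhammer_rec)
    hence R: "H11_coeff A (C + 1) (n - 1) = (- C) * pochhammer (1 - C) m / ((1 - A + of_nat m) * pochhammer (1 - A) m)"
      unfolding neg H11_coeff_minus_of_nat by (simp add: pochhammer_rec')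
    have "pochhammer (1 - A) m \<noteq> 0" "1 - A + of_nat m \<noteq> 0"
      using pochhammer_nonzero_if_notin_nonpos_Ints[OF A] add_of_nat_nonzero_if_notin_nonpos_Ints[OF A]
      by auto
    with C0 show ?thesis unfolding L M R by (simp add: divide_simps) (simp add: algebra_simps)
  qed
qed

lemma summable_on_H11_series:
  assumes A: "1 - A \<notin> \<int>\<^sub>\<le>\<^sub>0" and C: "C \<notin> \<int>\<^sub>\<le>\<^sub>0" and re: "Re (C - A) > 1" and z: "norm z = 1"
  shows "(\<lambda>n. H11_coeff A C n * z powi n) summable_on UNIV"
proof -
  obtain M1 where M1: "\<And>n. n \<ge> 1 \<Longrightarrow> norm (pochhammer A n / pochhammer C n) \<le> M1 * real n powr Re (A - C)"
    using pochhammer_quotient_bound[OF C] by blast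
  obtain M2 where M2: "\<And>n. n \<ge> 1 \<Longrightarrow>
      norm (pochhammer (1 - C) n / pochhammer (1 - A) n) \<le> M2 * real n powr Re ((1 - C) - (1 - A))"
    using pochhammer_quotient_bound[OF A] by blast
  have "summable (\<lambda>m. norm (H11_coeff A C (int m)))"
    by (rule summable_norm_if_powr_bound[of _ M1 "Re (A - C)"]) (use M1 re in \<open>auto simp: H11_coeff_of_nat\<close>)
  moreover have "summable (\<lambda>m. norm (H11_coeff A C (- int m)))"
    by (rule summable_norm_if_powr_bound[of _ M2 "Re (A - C)"]) (use M2 re in \<open>auto simp: H11_coeff_minus_of_nat\<close>)
  ultimately have "(\<lambda>n. norm (H11_coeff A C n)) summable_on UNIV"
    by (rule abs_summable_on_int_if_both_halves)
  thus ?thesis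
    using z by (simp add: summable_on_iff_abs_summable_on_complex norm_mult norm_power_int)
qed

text \<open>Summation by parts for a bilateral series: the shifted series sums to \<open>z\<close> times the
  original one.\<close>
lemma has_sum_int_from_difference:
  fixes f :: "int \<Rightarrow> complex"
  assumes sum: "(\<lambda>n. f n * z powi n) summable_on UNIV" and z: "z \<noteq> 0" "z \<noteq> 1"
    and diff: "((\<lambda>n. (f n - f (n - 1)) * z powi n) has_sum D) UNIV"
  shows "((\<lambda>n. f n * z powi n) has_sum D / (1 - z)) UNIV"
proof -
  define X where "X = infsum (\<lambda>n. f n * z powi n) UNIV"
  have hX: "((\<lambda>n. f n * z powi n) has_sum X) UNIV"
    unfolding X_def by (rule has_sum_infsum[OF sum])
  have "((\<lambda>n. f n * z powi n - f (n - 1) * z powi n) has_sum X - z * X) UNIV"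
    by (rule has_sum_diff[OF hX has_sum_int_shift_powi[OF z(1) hX]])
  hence "D = (1 - z) * X"
    using diff has_sum_unique by (fastforce simp: algebra_simps)
  thus ?thesis using hX z(2) by simp
qed

lemma H11_gamma_minus1_left:
  assumes "1 - A \<notin> \<int>\<^sub>\<le>\<^sub>0" and "C - A \<notin> \<int>\<^sub>\<le>\<^sub>0"
  shows "H11_gamma (A - 1) C = (1 - A) / (C - A) * H11_gamma A C"
proof -
  have "Gamma (1 - (A - 1)) = (1 - A) * Gamma (1 - A)" "Gamma (C - (A - 1)) = (C - A) * Gamma (C - A)"
    using Gamma_plus1[OF assms(1)] Gamma_plus1[OF assms(2)] by (simp_all add: algebra_simps)
  moreover have "Gamma (C - A) \<noteq> 0" "C - A \<noteq> 0"
    using assms(2) by (auto simp: Gamma_eq_zero_iff)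
  ultimately show ?thesis unfolding H11_gamma_def by (simp only:) (simp add: field_simps)
qed

lemma H11_gamma_plus1_right:
  assumes "C \<notin> \<int>\<^sub>\<le>\<^sub>0" and "C - A \<notin> \<int>\<^sub>\<le>\<^sub>0"
  shows "H11_gamma A (C + 1) = C / (C - A) * H11_gamma A C"
proof -
  have "Gamma (C + 1) = C * Gamma C" "Gamma (C + 1 - A) = (C - A) * Gamma (C - A)"
    using Gamma_plus1[OF assms(1)] Gamma_plus1[OF assms(2)] by (simp_all add: algebra_simps)
  moreover have "Gamma (C - A) \<noteq> 0" "C - A \<noteq> 0"
    using assms(2) by (auto simp: Gamma_eq_zero_iff)
  ultimately show ?thesis unfolding H11_gamma_def by (simp only:) (simp add: field_simps)
qed

lemma H11_power_minus1_left: "H11_power (A - 1) C z = (1 - z) * H11_power A C z"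
proof -
  have "(1 - z) powr (- (A - 1)) = (1 - z) powr (1 + - A)" by (simp add: algebra_simps)
  thus ?thesis unfolding H11_power_def by (simp only: powr_add powr_to_1 mult.assoc)
qed

lemma H11_power_plus1_right: "H11_power A (C + 1) z = (1 - cnj z) * H11_power A C z"
proof -
  have "(1 - cnj z) powr (C + 1 - 1) = (1 - cnj z) powr (1 + (C - 1))" by (simp add: algebra_simps)
  thus ?thesis unfolding H11_power_def by (simp only: powr_add powr_to_1 mult_ac)
qed

lemma minus_one_power_mult_minus_powi:
  fixes z :: "'a :: field"
  assumes "n = int m \<or> n = - int m"
  shows "(-1) ^ m * (- z) powi n = z powi n"
proof -
  have "(- z) powi n = (-1) powi n * z powi n"
    using power_int_mult_distrib[of "-1" z n] by simp
  moreover have "(-1 :: 'a) powi n = (-1) ^ m"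
    using assms by (auto simp: power_int_minus power_inverse[symmetric])
  ultimately show ?thesis by (simp flip: mult.assoc power_mult_distrib)
qed

lemma cnj_eq_inverse_if_norm_1:
  fixes u :: complex
  assumes "norm u = 1"
  shows "cnj u = inverse u"
  using assms complex_norm_square[of u] by (simp add: inverse_unique)

text \<open>For \<open>Re A < 0 < Re C - 1\<close> both binomial series converge absolutely on the unit
  circle, so their Cauchy product may be regrouped by the exponent of \<open>z\<close>.\<close>
lemma has_sum_H11_series_base:
  assumes reA: "Re A < 0" and reC: "Re C > 1" and z: "norm z = 1" "z \<noteq> 1"
  shows "((\<lambda>n. H11_coeff A C n * z powi n) has_sum H11_gamma A C * H11_power A C z) UNIV"
proof -
  define u where "u = - z"
  define v where "v = cnj u"
  have u: "norm u = 1" "u \<noteq> -1" and v: "norm v = 1" "v \<noteq> -1"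
    using z by (auto simp: u_def v_def complex_eq_iff)
  have v_inv: "v = inverse u" unfolding v_def by (rule cnj_eq_inverse_if_norm_1[OF u(1)])
  have C: "C \<notin> \<int>\<^sub>\<le>\<^sub>0" and A: "1 - A \<notin> \<int>\<^sub>\<le>\<^sub>0" and CA: "Re (C - A) > 0"
    using reA reC by (auto intro!: Re_pos_notin_nonpos_Ints)
  define f where "f = (\<lambda>j. ((- A) gchoose j) * u ^ j)"
  define g where "g = (\<lambda>k. ((C - 1) gchoose k) * v ^ k)"
  have f_abs: "(\<lambda>j. norm (f j)) summable_on UNIV" and g_abs: "(\<lambda>k. norm (g k)) summable_on UNIV"
    using summable_norm_gbinomial[of "- A"] summable_norm_gbinomial[of "C - 1"] reA reC u v
    by (simp_all add: f_def g_def norm_mult norm_power summable_on_UNIV_nonneg_real_iff)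
  have "(f has_sum (1 + u) powr (- A)) UNIV"
    using f_abs gbinomial_series_unit_circle[OF _ u, of "- A"] reA
    by (intro norm_summable_imp_has_sum) (simp_all add: f_def summable_on_UNIV_nonneg_real_iff)
  moreover have "(g has_sum (1 + v) powr (C - 1)) UNIV"
    using g_abs gbinomial_series_unit_circle[OF _ v, of "C - 1"] reC
    by (intro norm_summable_imp_has_sum) (simp_all add: g_def summable_on_UNIV_nonneg_real_iff)
  ultimately have "((\<lambda>(j, k). f j * g k) has_sum H11_power A C z) (UNIV \<times> UNIV)"
    using has_sum_mult_product f_abs g_abs by (fastforce simp: H11_power_def u_def v_def)
  moreover define h where "h p = (if 0 \<le> fst p + int (snd p) then (- A) gchoose nat (fst p + int (snd p)) else 0)
                          * ((C - 1) gchoose snd p) * u powi fst p" for p :: "int \<times> nat"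
  have "((\<lambda>(j, k). f j * g k) has_sum H11_power A C z) (UNIV \<times> UNIV)
      = (h has_sum H11_power A C z) {p. 0 \<le> fst p + int (snd p)}"
  proof (rule has_sum_reindex_bij_witness[where i = "\<lambda>p. (nat (fst p + int (snd p)), snd p)"
                                           and j = "\<lambda>p. (int (fst p) - int (snd p), snd p)"])
    fix p :: "nat \<times> nat"
    have "u powi (int (fst p) - int (snd p)) = u ^ fst p * v ^ snd p"
      using u(1) by (subst power_int_diff) (auto simp: v_inv power_inverse divide_inverse)
    thus "h (int (fst p) - int (snd p), snd p) = (\<lambda>(j, k). f j * g k) p"
      by (simp add: h_def f_def g_def case_prod_unfold)
  qed auto
  ultimately have h_sum: "(h has_sum H11_power A C z) (UNIV \<times> UNIV)"
    by (subst (asm) has_sum_cong_neutral[where T = "UNIV \<times> UNIV" and g = h]) (auto simp: h_def)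
  have sign: "(-1) ^ m * c / H11_gamma A C * u powi n = c * z powi n / H11_gamma A C"
    if "n = int m \<or> n = - int m" for c m n
  proof -
    have "(-1) ^ m * c / H11_gamma A C * u powi n = c / H11_gamma A C * ((-1) ^ m * (- z) powi n)"
      by (simp add: u_def)
    also have "\<dots> = c * z powi n / H11_gamma A C"
      unfolding minus_one_power_mult_minus_powi[OF that] by simp
    finally show ?thesis .
  qed
  from h_sum have "((\<lambda>n. H11_coeff A C n * z powi n / H11_gamma A C) has_sum H11_power A C z) UNIV"
  proof (rule has_sum_SigmaD)
    fix n :: int
    show "((\<lambda>k. h (n, k)) has_sum H11_coeff A C n * z powi n / H11_gamma A C) UNIV"
    proof (cases n rule: int_cases2)
      case (nonneg m)
      have "((\<lambda>k. h (n, k)) has_sum (-1) ^ m * H11_coeff A C n / H11_gamma A C * u powi n) UNIV"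
        using has_sum_cmult_left[OF has_sum_gbinomial_convolution_left[OF CA C], of m "u powi n"] nonneg
        by (simp add: h_def nat_add_distrib H11_coeff_of_nat)
      thus ?thesis unfolding sign[OF disjI1[OF nonneg]] .
    next
      case (nonpos m)
      have "((\<lambda>j. h (n, j + m)) has_sum (-1) ^ m * H11_coeff A C n / H11_gamma A C * u powi n) UNIV"
        using has_sum_cmult_left[OF has_sum_gbinomial_convolution_right[OF CA A], of m "u powi n"] nonpos
        by (simp add: h_def H11_coeff_minus_of_nat)
      hence "((\<lambda>j. h (n, j + m)) has_sum H11_coeff A C n * z powi n / H11_gamma A C) UNIV"
        unfolding sign[OF disjI2[OF nonpos]] .
      thus ?thesis
        by (rule has_sum_nat_shift[rotated]) (simp add: h_def nonpos)
    qed
  qed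
  moreover have "H11_gamma A C \<noteq> 0"
    using A C Re_pos_notin_nonpos_Ints[OF CA] by (simp add: H11_gamma_def Gamma_eq_zero_iff)
  ultimately show ?thesis
    using has_sum_cmult_right[of _ UNIV _ "H11_gamma A C"] by fastforce
qed

lemma has_sum_H11_series_from_minus1_left:
  assumes A: "1 - A \<notin> \<int>\<^sub>\<le>\<^sub>0" and C: "C \<notin> \<int>\<^sub>\<le>\<^sub>0" and re: "Re (C - A) > 1"
    and z: "norm z = 1" "z \<noteq> 1"
    and IH: "((\<lambda>n. H11_coeff (A - 1) C n * z powi n) has_sum
               H11_gamma (A - 1) C * H11_power (A - 1) C z) UNIV"
  shows "((\<lambda>n. H11_coeff A C n * z powi n) has_sum H11_gamma A C * H11_power A C z) UNIV"
proof -
  have CA: "C - A \<notin> \<int>\<^sub>\<le>\<^sub>0" "C - A \<noteq> 0" and A1: "A - 1 \<noteq> 0"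
    using re add_of_nat_nonzero_if_notin_nonpos_Ints[OF A, of 0] by (auto intro!: Re_pos_notin_nonpos_Ints)
  have z0: "z \<noteq> 0" using z by auto
  have "((\<lambda>n. (H11_coeff A C n - H11_coeff A C (n - 1)) * z powi n) has_sum
          (A - C) / (A - 1) * (H11_gamma (A - 1) C * H11_power (A - 1) C z)) UNIV"
    using has_sum_cmult_right[OF IH, of "(A - C) / (A - 1)"]
    by (simp add: H11_coeff_diff_eq_minus1_left[OF A C] mult.assoc)
  also have "(A - C) / (A - 1) * (H11_gamma (A - 1) C * H11_power (A - 1) C z)
      = ((A - C) / (A - 1) * ((1 - A) / (C - A))) * ((1 - z) * (H11_gamma A C * H11_power A C z))"
    by (simp add: H11_gamma_minus1_left[OF A CA(1)] H11_power_minus1_left mult_ac)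
  also have "(A - C) / (A - 1) * ((1 - A) / (C - A)) = 1"
  proof -
    have "(A - C) * (1 - A) = (A - 1) * (C - A)" by (simp add: algebra_simps)
    thus ?thesis using A1 CA by (simp add: divide_simps)
  qed
  finally have "((\<lambda>n. (H11_coeff A C n - H11_coeff A C (n - 1)) * z powi n) has_sum
                  (1 - z) * (H11_gamma A C * H11_power A C z)) UNIV" by simp
  from has_sum_int_from_difference[OF summable_on_H11_series[OF A C re z(1)] z0 z(2) this]
  show ?thesis using z by simp
qed

lemma has_sum_H11_series_from_plus1_right:
  assumes A: "1 - A \<notin> \<int>\<^sub>\<le>\<^sub>0" and C: "C \<notin> \<int>\<^sub>\<le>\<^sub>0" and re: "Re (C - A) > 1"
    and z: "norm z = 1" "z \<noteq> 1"
    and IH: "((\<lambda>n. H11_coeff A (C + 1) n * z powi n) has_sum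
               H11_gamma A (C + 1) * H11_power A (C + 1) z) UNIV"
  shows "((\<lambda>n. H11_coeff A C n * z powi n) has_sum H11_gamma A C * H11_power A C z) UNIV"
proof -
  have CA: "C - A \<notin> \<int>\<^sub>\<le>\<^sub>0" "C - A \<noteq> 0" and C0: "C \<noteq> 0"
    using re add_of_nat_nonzero_if_notin_nonpos_Ints[OF C, of 0] by (auto intro!: Re_pos_notin_nonpos_Ints)
  have z0: "z \<noteq> 0" using z by auto
  have "((\<lambda>n. (H11_coeff A C n - H11_coeff A C (n - 1)) * z powi n) has_sum
          (A - C) / C * (z * (H11_gamma A (C + 1) * H11_power A (C + 1) z))) UNIV"
    using has_sum_cmult_right[OF has_sum_int_shift_powi[OF z0 IH], of "(A - C) / C"]
    by (simp add: H11_coeff_diff_eq_plus1_right[OF A C] mult.assoc)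
  also have "(A - C) / C * (z * (H11_gamma A (C + 1) * H11_power A (C + 1) z))
      = (1 - z) * (H11_gamma A C * H11_power A C z)"
  proof -
    have "(A - C) / C * (z * (H11_gamma A (C + 1) * H11_power A (C + 1) z))
        = ((A - C) / C * (C / (C - A))) * (z * (1 - cnj z)) * (H11_gamma A C * H11_power A C z)"
      by (simp add: H11_gamma_plus1_right[OF C CA(1)] H11_power_plus1_right mult_ac)
    also have "(A - C) / C * (C / (C - A)) = -1"
    proof -
      have "(A - C) * C = - (C * (C - A))" by (simp add: algebra_simps)
      thus ?thesis using C0 CA by (simp add: divide_simps)
    qed
    also have "z * (1 - cnj z) = z - 1"
      using z(1) complex_norm_square[of z] by (simp add: right_diff_distrib)
    finally show ?thesis by (simp add: algebra_simps)
  qed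
  finally have "((\<lambda>n. (H11_coeff A C n - H11_coeff A C (n - 1)) * z powi n) has_sum
                  (1 - z) * (H11_gamma A C * H11_power A C z)) UNIV" .
  from has_sum_int_from_difference[OF summable_on_H11_series[OF A C re z(1)] z0 z(2) this]
  show ?thesis using z by simp
qed

lemma has_sum_H11_series_Re_left_neg:
  assumes reA: "Re A < 0" and C: "C \<notin> \<int>\<^sub>\<le>\<^sub>0" and re: "Re (C - A) > 1" and l: "Re C + real l > 1"
    and z: "norm z = 1" "z \<noteq> 1"
  shows "((\<lambda>n. H11_coeff A C n * z powi n) has_sum H11_gamma A C * H11_power A C z) UNIV"
  using C re l
proof (induction l arbitrary: C)
  case 0
  thus ?case using has_sum_H11_series_base[OF reA _ z] by simp
next
  case (Suc l)
  have A: "1 - A \<notin> \<int>\<^sub>\<le>\<^sub>0" using reA by (intro Re_pos_notin_nonpos_Ints) simp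
  show ?case
    using Suc add_of_nat_notin_nonpos_Ints[OF Suc.prems(1), of 1]
    by (intro has_sum_H11_series_from_plus1_right[OF A Suc.prems(1,2) z] Suc.IH) auto
qed

theorem has_sum_H11_series:
  assumes A: "1 - A \<notin> \<int>\<^sub>\<le>\<^sub>0" and C: "C \<notin> \<int>\<^sub>\<le>\<^sub>0" and re: "Re (C - A) > 1"
    and z: "norm z = 1" "z \<noteq> 1"
  shows "((\<lambda>n. H11_coeff A C n * z powi n) has_sum H11_gamma A C * H11_power A C z) UNIV"
proof -
  obtain k :: nat where "Re A < real k" using reals_Archimedean2 by blast
  thus ?thesis using A re
  proof (induction k arbitrary: A)
    case 0
    obtain l :: nat where "1 - Re C < real l" using reals_Archimedean2 by blast
    hence "Re C + real l > 1" by simp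
    thus ?case using has_sum_H11_series_Re_left_neg[OF _ C _ _ z] 0 by simp
  next
    case (Suc k)
    have "1 - (A - 1) \<notin> \<int>\<^sub>\<le>\<^sub>0"
      using add_of_nat_notin_nonpos_Ints[OF Suc.prems(2), of 1] by (simp add: algebra_simps)
    thus ?case
      using Suc by (intro has_sum_H11_series_from_minus1_left[OF Suc.prems(2) C Suc.prems(3) z] Suc.IH) auto
  qed
qed

section \<open>Branches on the unit circle\<close>

lemma unit_circle_eq_exp_Arg:
  fixes u :: complex
  assumes "norm u = 1"
  shows "u = exp (\<i> * of_real (Arg u))"
proof -
  have "u \<noteq> 0" using assms by auto
  thus ?thesis using cis_Arg[of u] assms by (simp add: sgn_eq cis_conv_exp)
qed

lemma Arg_unit_circle_neq_pi:
  fixes u :: complex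
  assumes "norm u = 1" "u \<noteq> -1"
  shows "Arg u \<noteq> pi"
  using unit_circle_neq_minus_one_imp_Re_gt[OF assms] Arg_eq_pi[of u] assms
  by (auto simp: cmod_def power2_eq_1_iff)

lemma one_plus_unit_circle_eq_exp:
  fixes u :: complex
  assumes u: "norm u = 1" "u \<noteq> -1"
  defines "\<psi> \<equiv> Arg u"
  shows "2 * cos (\<psi> / 2) > 0"
    and "1 + u = exp (of_real (ln (2 * cos (\<psi> / 2))) + \<i> * of_real (\<psi> / 2))"
proof -
  have "- pi < \<psi>" "\<psi> < pi"
    using Arg_bounded[of u] Arg_unit_circle_neq_pi[OF u] by (auto simp: \<psi>_def)
  thus pos: "2 * cos (\<psi> / 2) > 0" by (intro mult_pos_pos cos_gt_zero_pi) auto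
  have "1 + u = of_real (2 * cos (\<psi> / 2)) * cis (\<psi> / 2)"
  proof (rule complex_eqI)
    have "cos \<psi> = 2 * cos (\<psi> / 2) ^ 2 - 1" "sin \<psi> = 2 * sin (\<psi> / 2) * cos (\<psi> / 2)"
      using cos_double_cos[of "\<psi> / 2"] sin_double[of "\<psi> / 2"] by simp_all
    thus "Re (1 + u) = Re (of_real (2 * cos (\<psi> / 2)) * cis (\<psi> / 2))"
         "Im (1 + u) = Im (of_real (2 * cos (\<psi> / 2)) * cis (\<psi> / 2))"
      by (subst unit_circle_eq_exp_Arg[OF u(1)], simp add: \<psi>_def Re_exp Im_exp power2_eq_square)+
  qed
  thus "1 + u = exp (of_real (ln (2 * cos (\<psi> / 2))) + \<i> * of_real (\<psi> / 2))"
    using pos by (simp add: exp_add cis_conv_exp exp_of_real)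
qed

lemma onep_pow_eq_powr:
  assumes u: "norm u = 1" "u \<noteq> -1"
  shows "onep_pow u s = (1 + u) powr s"
proof -
  define L where "L = ln (2 * cos (Arg u / 2))"
  have "Ln (1 + u) = of_real L + \<i> * of_real (Arg u / 2)"
    using one_plus_unit_circle_eq_exp(2)[OF u] Arg_bounded[of u] by (simp add: L_def)
  moreover have "1 + u \<noteq> 0" using u(2) by (simp add: add_eq_0_iff)
  moreover have "Ln (2 * complex_of_real (cos (Arg u / 2))) = of_real L"
    using one_plus_unit_circle_eq_exp(1)[OF u] Ln_of_real[of "2 * cos (Arg u / 2)"] by (simp add: L_def)
  ultimately show ?thesis
    using one_plus_unit_circle_eq_exp(1)[OF u]
    by (simp add: onep_pow_def powr_def exp_add[symmetric] algebra_simps)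
qed

lemma circ_pow_eq_powr:
  assumes "norm u = 1"
  shows "circ_pow u s = u powr s"
proof -
  have "Ln u = \<i> * of_real (Arg u)"
    using Arg_bounded[of u] by (subst unit_circle_eq_exp_Arg[OF assms]) simp
  thus ?thesis using assms by (auto simp: circ_pow_def powr_def mult_ac)
qed

lemma powr_divide_unit_circle_eq_H11_power:
  assumes u: "norm u = 1" "u \<noteq> -1"
  shows "(1 + u) powr (C - A - 1) / u powr (C - 1) = H11_power A C (- u)"
proof -
  define \<psi> where "\<psi> = Arg u"
  define L where "L = complex_of_real (ln (2 * cos (\<psi> / 2)))"
  have bounds: "- pi < \<psi>" "\<psi> \<le> pi"
    using Arg_bounded[of u] by (auto simp: \<psi>_def)
  have eq: "1 + u = exp (L + \<i> * of_real (\<psi> / 2))"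
    using one_plus_unit_circle_eq_exp(2)[OF u] by (simp add: L_def \<psi>_def)
  hence Ln_plus: "Ln (1 + u) = L + \<i> * of_real (\<psi> / 2)"
    using bounds by (simp add: L_def)
  have "1 + cnj u = cnj (1 + u)" by simp
  also have "\<dots> = exp (L - \<i> * of_real (\<psi> / 2))"
    unfolding eq exp_cnj by (simp add: L_def)
  finally have "Ln (1 + cnj u) = L - \<i> * of_real (\<psi> / 2)"
    using bounds by (simp add: L_def)
  moreover have "Ln u = \<i> * of_real \<psi>"
    using bounds by (subst unit_circle_eq_exp_Arg[OF u(1)]) (simp add: \<psi>_def)
  moreover have "u \<noteq> 0" "1 + u \<noteq> 0" "1 + cnj u \<noteq> 0"
    using u by (auto simp: add_eq_0_iff complex_eq_iff cmod_def)
  ultimately have lhs: "(1 + u) powr (C - A - 1) / u powr (C - 1)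
      = exp ((C - A - 1) * (L + \<i> * of_real (\<psi> / 2)) - (C - 1) * (\<i> * of_real \<psi>))"
    and rhs: "H11_power A C (- u)
      = exp (- A * (L + \<i> * of_real (\<psi> / 2))) * exp ((C - 1) * (L - \<i> * of_real (\<psi> / 2)))"
    using Ln_plus by (simp_all add: H11_power_def powr_def exp_diff)
  have "(C - A - 1) * (L + \<i> * of_real (\<psi> / 2)) - (C - 1) * (\<i> * of_real \<psi>)
      = - A * (L + \<i> * of_real (\<psi> / 2)) + (C - 1) * (L - \<i> * of_real (\<psi> / 2))"
    by (simp add: field_simps)
  thus ?thesis unfolding lhs rhs exp_add[symmetric] by (rule arg_cong)
qed

section \<open>The quadratic transformation\<close>

lemma poch_int_duplication:
  fixes a :: complex
  shows "poch_int a m * poch_int (a + 1/2) m = poch_int (2 * a) (2 * m) / 4 powi m"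
proof (cases "0 \<le> m")
  case True
  then obtain k where m: "m = int k" using nonneg_int_cases by blast
  have "nat (2 * int k) = 2 * k" by simp
  thus ?thesis
    using pochhammer_double[of a k] by (simp add: poch_int_def m power_mult)
next
  case False
  define k where "k = nat (- m)"
  have m: "m = - int k" and k: "k > 0" using False by (simp_all add: k_def)
  have e1: "poch_int a m = 1 / pochhammer (a - of_nat k) k"
    and e2: "poch_int (a + 1/2) m = 1 / pochhammer (a - of_nat k + 1/2) k"
    using k by (simp_all add: poch_int_def m algebra_simps)
  have e3: "poch_int (2 * a) (2 * m) = 1 / pochhammer (2 * (a - of_nat k)) (2 * k)"
    using k by (simp add: poch_int_def m nat_mult_distrib right_diff_distrib)
  have e4: "(4 :: complex) powi m = inverse (of_nat (2 ^ (2 * k)))"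
    by (simp add: m power_int_minus power_mult)
  show ?thesis unfolding e1 e2 e3 e4 pochhammer_double by simp
qed

lemma H22_term_duplication:
  "H22_term a (a + 1/2) c (c + 1/2) (w ^ 2) m = H11_coeff (2 * a) (2 * c) (2 * m) * w powi (2 * m)"
proof -
  have "(w ^ 2) powi m = w powi (2 * m)" using power_int_power[of w 2 m] by simp
  moreover have "(4 :: complex) powi m \<noteq> 0" by simp
  ultimately show ?thesis
    by (simp add: H22_term_def H11_coeff_def poch_int_duplication)
qed

lemma H22_rhs_eq_H11:
  assumes w: "norm w = 1" "w \<noteq> 1" "w \<noteq> -1"
  shows "H22_rhs a c w
       = H11_gamma (2 * a) (2 * c) * (H11_power (2 * a) (2 * c) w + H11_power (2 * a) (2 * c) (- w)) / 2"
proof -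
  have mw: "norm (- w) = 1" "- w \<noteq> -1" using w by auto
  have "onep_pow w (2 * c - 2 * a - 1) / circ_pow w (2 * c - 1) = H11_power (2 * a) (2 * c) (- w)"
    using powr_divide_unit_circle_eq_H11_power[OF w(1,3), of "2 * c" "2 * a"] w
    by (simp add: onep_pow_eq_powr circ_pow_eq_powr)
  moreover have "onep_pow (- w) (2 * c - 2 * a - 1) / circ_pow (- w) (2 * c - 1) = H11_power (2 * a) (2 * c) w"
    using powr_divide_unit_circle_eq_H11_power[OF mw, of "2 * c" "2 * a"] mw
    by (simp add: onep_pow_eq_powr circ_pow_eq_powr)
  ultimately show ?thesis by (simp add: H22_rhs_def H11_gamma_def field_simps)
qed

theorem mainTheorem1:
  fixes a c w z :: complex
  assumes h2c: "\<forall>n::nat. 2 * c \<noteq> - of_nat n"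
    and h2a: "\<forall>n::nat. n \<ge> 1 \<longrightarrow> 2 * a \<noteq> of_nat n"
    and hre: "Re (c - a) > 1 / 2"
    and hw: "norm w = 1" "w \<noteq> 1" "w \<noteq> -1"
    and hz: "z = w ^ 2"
  shows "(H22_term a (a + 1/2) c (c + 1/2) z has_sum H22_rhs a c w) (UNIV :: int set)
         \<and> H22_rhs a c w = H22_rhs a c (- w)"
proof
  define A C where "A = 2 * a" and "C = 2 * c"
  have A: "1 - A \<notin> \<int>\<^sub>\<le>\<^sub>0"
  proof
    assume "1 - A \<in> \<int>\<^sub>\<le>\<^sub>0"
    then obtain n where "A = of_nat (Suc n)" by (auto elim!: nonpos_Ints_cases' simp: algebra_simps)
    with h2a show False by (auto simp: A_def)
  qed
  have C: "C \<notin> \<int>\<^sub>\<le>\<^sub>0" using h2c by (auto simp: C_def elim!: nonpos_Ints_cases')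
  have re: "Re (C - A) > 1" using hre by (simp add: A_def C_def)
  have "((\<lambda>n. H11_coeff A C n * w powi n + H11_coeff A C n * (- w) powi n) has_sum
          H11_gamma A C * H11_power A C w + H11_gamma A C * H11_power A C (- w)) UNIV"
    using hw by (intro has_sum_add has_sum_H11_series[OF A C re]) (auto simp: minus_equation_iff)
  hence "((\<lambda>m. H11_coeff A C (2 * m) * w powi (2 * m) + H11_coeff A C (2 * m) * (- w) powi (2 * m))
          has_sum H11_gamma A C * H11_power A C w + H11_gamma A C * H11_power A C (- w)) UNIV"
    by (rule has_sum_int_even) simp
  hence "((\<lambda>m. 2 * H22_term a (a + 1/2) c (c + 1/2) z m) has_sum
          H11_gamma A C * (H11_power A C w + H11_power A C (- w))) UNIV"
    by (simp add: hz H22_term_duplication A_def C_def algebra_simps)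
  hence "(H22_term a (a + 1/2) c (c + 1/2) z has_sum
          H11_gamma A C * (H11_power A C w + H11_power A C (- w)) / 2) UNIV"
    by (subst (asm) has_sum_cmult_right_iff) auto
  thus "(H22_term a (a + 1/2) c (c + 1/2) z has_sum H22_rhs a c w) UNIV"
    unfolding H22_rhs_eq_H11[OF hw] A_def C_def .
  show "H22_rhs a c w = H22_rhs a c (- w)"
    by (simp add: H22_rhs_def add.commute)
qed

end
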